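(* Let $\mathsf{K}>0$ and let $\omega_{\Delta^n}=\sqrt{-1}\sum_{\alpha=1}^n\frac{2}{\mathsf{K}(1-|z^\alpha|^2)^2}dz^\alpha\wedge dz^{\bar\alpha}$ be the complete Kähler-Einstein metric of the polydisc $\Delta^n=\{z\in\mathbb{C}^n:|z^\alpha|<1,\ \alpha=1,\dots,n\}$ with Ricci curvature $-\mathsf{K}$. If $\varphi$ is a local potential of $\omega_{\Delta^n}$ with constant gradient length, then $|\partial\varphi|_{\omega_{\Delta^n}}^2\equiv 2n/\mathsf{K}$.
   Context: Conventions: $dd^c=\sqrt{-1}\partial\bar\partial$; a local potential satisfies $dd^c\varphi=\omega_{\Delta^n}$ on an open subset; $|\partial\varphi|_\omega^2=g^{\alpha\bar\beta}\varphi_\alpha\varphi_{\bar\beta}$ where $\omega=\sqrt{-1}g_{\alpha\bar\beta}dz^\alpha\wedge dz^{\bar\beta}$. *)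

theory Defs
  imports "HOL-Analysis.Analysis"
begin

text \<open>Points of C^n are vectors  z :: complex ^ 'n  (n = CARD('n)).
  Real-differentiability is Frechet differentiability over the reals.\<close>

fun Ck_on :: "nat \<Rightarrow> ('a::real_normed_vector \<Rightarrow> 'b::real_normed_vector) \<Rightarrow> 'a set \<Rightarrow> bool" where
  "Ck_on 0 f U = continuous_on U f"
| "Ck_on (Suc k) f U =
     ((\<forall>z\<in>U. f differentiable (at z)) \<and>
      (\<forall>v. Ck_on k (\<lambda>z. frechet_derivative f (at z) v) U))"

definition smooth_on_set :: "('a::real_normed_vector \<Rightarrow> 'b::real_normed_vector) \<Rightarrow> 'a set \<Rightarrow> bool" where
  "smooth_on_set f U \<longleftrightarrow> (\<forall>k. Ck_on k f U)"

text \<open>Wirtinger derivatives  d/dz^a = (d/dx^a - i d/dy^a)/2  and  d/dzbar^a = (d/dx^a + i d/dy^a)/2.\<close>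
definition wirt_dz :: "(complex ^ 'n \<Rightarrow> complex) \<Rightarrow> complex ^ 'n \<Rightarrow> 'n \<Rightarrow> complex" where
  "wirt_dz f z a = (frechet_derivative f (at z) (axis a 1)
                    - \<i> * frechet_derivative f (at z) (axis a \<i>)) / 2"

definition wirt_dzbar :: "(complex ^ 'n \<Rightarrow> complex) \<Rightarrow> complex ^ 'n \<Rightarrow> 'n \<Rightarrow> complex" where
  "wirt_dzbar f z a = (frechet_derivative f (at z) (axis a 1)
                    + \<i> * frechet_derivative f (at z) (axis a \<i>)) / 2"

definition polydisc :: "(complex ^ 'n) set" where
  "polydisc = {z. \<forall>a. cmod (z $ a) < 1}"

definition pd_metric :: "real \<Rightarrow> complex ^ 'n \<Rightarrow> 'n \<Rightarrow> 'n \<Rightarrow> real" where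
  "pd_metric K z a b = (if a = b then 2 / (K * (1 - (cmod (z $ a))\<^sup>2)\<^sup>2) else 0)"

text \<open>phi is a local potential of omega on U: phi smooth real-valued on the open set U
  and dd^c phi = omega, i.e. d^2 phi / dz^a dzbar^b = g_{a bbar}.\<close>
definition local_potential :: "real \<Rightarrow> (complex ^ 'n \<Rightarrow> real) \<Rightarrow> (complex ^ 'n) set \<Rightarrow> bool" where
  "local_potential K \<phi> U \<longleftrightarrow>
     open U \<and> U \<subseteq> polydisc \<and> smooth_on_set \<phi> U \<and>
     (\<forall>z\<in>U. \<forall>a b. wirt_dzbar (\<lambda>w. wirt_dz (\<lambda>u. complex_of_real (\<phi> u)) w a) z b
                    = complex_of_real (pd_metric K z a b))"

text \<open>|d phi|^2_omega = sum_{a,b} g^{a bbar} phi_a phi_bbar; g is diagonal, so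
  g^{a abar} = 1/g_{a abar} and phi_abar = conj(phi_a) for real phi.\<close>
definition grad_len_sq :: "real \<Rightarrow> (complex ^ 'n \<Rightarrow> real) \<Rightarrow> complex ^ 'n \<Rightarrow> real" where
  "grad_len_sq K \<phi> z =
     (\<Sum>a\<in>UNIV. (cmod (wirt_dz (\<lambda>u. complex_of_real (\<phi> u)) z a))\<^sup>2 / pd_metric K z a a)"

end

theory Submission
  imports Defs
begin

(* Differentiating the constant gradient length F = sum_a g^{a abar} |phi_a|^2 once (dzbar) and
   once more (dz) gives two identities. Since the polydisc metric is diagonal and g^{a abar} depends
   only on z^a, they say that N = S (Hess phi + D) S and e = S (d phi), with S = diag (sqrt g^{a abar})
   and a suitable diagonal shift D, satisfy: N is symmetric, N conj(N) = diag (K |e_b|^2 - 1) and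
   N conj(e) = -e. Then N commutes with W = diag (K |e_b|^2 - 2), and expanding conj(e)^T W e with
   e = -N conj(e) gives sum_b w_b^2 |e_b|^2 = 0. As K |e_b|^2 - 1 is a sum of squares, e_b <> 0,
   so K |e_b|^2 = 2 for every b and |d phi|^2 = sum_b |e_b|^2 = 2 n / K. *)

section \<open>Smooth functions and symmetry of second derivatives\<close>

abbreviation DD :: "('a::real_normed_vector \<Rightarrow> 'b::real_normed_vector) \<Rightarrow> 'a \<Rightarrow> 'a \<Rightarrow> 'b" where
  "DD f z v \<equiv> frechet_derivative f (at z) v"

lemma Ck_on_cong:
  assumes "open U" "\<And>z. z \<in> U \<Longrightarrow> f z = g z" "Ck_on k f U"
  shows "Ck_on k g U"
  using assms
proof (induction k arbitrary: f g)
  case 0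
  then show ?case using continuous_on_cong by force
next
  case (Suc k)
  have "(g has_derivative DD f z) (at z)" if "z \<in> U" for z
  proof (rule has_derivative_transform_within_open[OF _ \<open>open U\<close> that])
    show "(f has_derivative DD f z) (at z)"
      using Suc.prems(3) that by (simp add: frechet_derivative_works)
  qed (use Suc.prems(2) in auto)
  then have diff: "\<forall>z\<in>U. g differentiable (at z)"
    by (auto simp: differentiable_def)
  have "DD f z = DD g z" if "z \<in> U" for z
    using Suc.prems that by (intro frechet_derivative_transform_within_open[OF _ \<open>open U\<close> that]) auto
  moreover have "Ck_on k (\<lambda>z. DD f z v) U" for v
    using Suc.prems(3) by simp
  ultimately have "Ck_on k (\<lambda>z. DD g z v) U" for v
    using Suc.IH[of "\<lambda>z. DD f z v" "\<lambda>z. DD g z v"] \<open>open U\<close> by auto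
  with diff show ?case by simp
qed

lemma Ck_on_compose_bounded_linear:
  assumes "open U" "bounded_linear L" "Ck_on k f U"
  shows "Ck_on k (\<lambda>z. L (f z)) U"
  using assms(3)
proof (induction k arbitrary: f)
  case 0
  then show ?case
    using assms(2) by (auto intro: continuous_on_compose2[OF linear_continuous_on])
next
  case (Suc k)
  have der: "((\<lambda>z. L (f z)) has_derivative (\<lambda>h. L (DD f z h))) (at z)" if "z \<in> U" for z
    using Suc.prems that
    by (auto intro!: bounded_linear.has_derivative[OF assms(2)] simp: frechet_derivative_works)
  have "Ck_on k (\<lambda>z. DD (\<lambda>z. L (f z)) z v) U" for v
  proof (rule Ck_on_cong[OF \<open>open U\<close>])
    show "Ck_on k (\<lambda>z. L (DD f z v)) U"
      using Suc.prems Suc.IH by simp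
  qed (use fun_cong[OF frechet_derivative_at[OF der]] in simp)
  with der show ?case
    by (auto simp: differentiable_def)
qed

lemma Ck_on_add:
  assumes "open U" "Ck_on k f U" "Ck_on k g U"
  shows "Ck_on k (\<lambda>z. f z + g z) U"
  using assms(2,3)
proof (induction k arbitrary: f g)
  case 0
  then show ?case by (auto intro: continuous_on_add)
next
  case (Suc k)
  have der: "((\<lambda>z. f z + g z) has_derivative (\<lambda>h. DD f z h + DD g z h)) (at z)" if "z \<in> U" for z
    using Suc.prems that by (auto intro!: has_derivative_add simp: frechet_derivative_works)
  have "Ck_on k (\<lambda>z. DD (\<lambda>z. f z + g z) z v) U" for v
  proof (rule Ck_on_cong[OF \<open>open U\<close>])
    show "Ck_on k (\<lambda>z. DD f z v + DD g z v) U"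
      using Suc.prems Suc.IH by simp
  qed (use fun_cong[OF frechet_derivative_at[OF der]] in simp)
  with der show ?case
    by (auto simp: differentiable_def)
qed

lemma smooth_on_set_imp_differentiable:
  "smooth_on_set f U \<Longrightarrow> z \<in> U \<Longrightarrow> f differentiable (at z)"
  unfolding smooth_on_set_def by (metis Ck_on.simps(2))

lemma smooth_on_set_frechet_derivative:
  "smooth_on_set f U \<Longrightarrow> smooth_on_set (\<lambda>z. DD f z v) U"
  unfolding smooth_on_set_def by (metis Ck_on.simps(2))

lemma smooth_on_set_cong:
  "open U \<Longrightarrow> (\<And>z. z \<in> U \<Longrightarrow> f z = g z) \<Longrightarrow> smooth_on_set f U \<Longrightarrow> smooth_on_set g U"
  unfolding smooth_on_set_def using Ck_on_cong by blast

lemma smooth_on_set_compose_bounded_linear: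
  "open U \<Longrightarrow> bounded_linear L \<Longrightarrow> smooth_on_set f U \<Longrightarrow> smooth_on_set (\<lambda>z. L (f z)) U"
  unfolding smooth_on_set_def using Ck_on_compose_bounded_linear by blast

lemma smooth_on_set_add:
  "open U \<Longrightarrow> smooth_on_set f U \<Longrightarrow> smooth_on_set g U \<Longrightarrow> smooth_on_set (\<lambda>z. f z + g z) U"
  unfolding smooth_on_set_def using Ck_on_add by blast

lemma has_real_derivative_along_line:
  fixes \<psi> :: "'a::real_normed_vector \<Rightarrow> real"
  assumes "\<psi> differentiable (at (p + t *\<^sub>R v))"
  shows "((\<lambda>s. \<psi> (p + s *\<^sub>R v)) has_real_derivative DD \<psi> (p + t *\<^sub>R v) v) (at t)"
proof -
  have "(\<psi> has_derivative DD \<psi> (p + t *\<^sub>R v)) (at (p + t *\<^sub>R v))"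
    using assms frechet_derivative_works by blast
  then have "((\<lambda>s. \<psi> (p + s *\<^sub>R v)) has_derivative (\<lambda>s. DD \<psi> (p + t *\<^sub>R v) (s *\<^sub>R v))) (at t)"
    by (rule has_derivative_compose[rotated]) (auto intro!: derivative_eq_intros)
  moreover have "linear (DD \<psi> (p + t *\<^sub>R v))"
    using assms by (simp add: frechet_derivative_works has_derivative_linear)
  then have "(\<lambda>s. DD \<psi> (p + t *\<^sub>R v) (s *\<^sub>R v)) = (*) (DD \<psi> (p + t *\<^sub>R v) v)"
    by (simp add: fun_eq_iff linear_cmul)
  ultimately show ?thesis
    by (simp add: has_field_derivative_def)
qed

lemma mixed_difference_mean_value:
  fixes \<psi> :: "'a::real_normed_vector \<Rightarrow> real"
  assumes h: "0 < h"
    and box: "\<And>s t. 0 \<le> s \<Longrightarrow> s \<le> h \<Longrightarrow> 0 \<le> t \<Longrightarrow> t \<le> h \<Longrightarrow> z + s *\<^sub>R v + t *\<^sub>R u \<in> S"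
    and diff: "\<And>x. x \<in> S \<Longrightarrow> \<psi> differentiable (at x)"
      "\<And>x. x \<in> S \<Longrightarrow> (\<lambda>w. DD \<psi> w v) differentiable (at x)"
  obtains s t where "0 < s" "s < h" "0 < t" "t < h"
    "\<psi> (z + h *\<^sub>R v + h *\<^sub>R u) - \<psi> (z + h *\<^sub>R v) - \<psi> (z + h *\<^sub>R u) + \<psi> z
       = h\<^sup>2 * DD (\<lambda>w. DD \<psi> w v) (z + s *\<^sub>R v + t *\<^sub>R u) u"
proof -
  have "\<exists>s. 0 < s \<and> s < h \<and>
      (\<psi> (z + h *\<^sub>R u + h *\<^sub>R v) - \<psi> (z + h *\<^sub>R v)) - (\<psi> (z + h *\<^sub>R u + 0 *\<^sub>R v) - \<psi> (z + 0 *\<^sub>R v))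
      = (h - 0) * (DD \<psi> (z + h *\<^sub>R u + s *\<^sub>R v) v - DD \<psi> (z + s *\<^sub>R v) v)"
  proof (rule MVT2[OF h])
    fix s assume "0 \<le> s" "s \<le> h"
    then have "z + h *\<^sub>R u + s *\<^sub>R v \<in> S" "z + s *\<^sub>R v \<in> S"
      using box[of s h] box[of s 0] h by (simp_all add: algebra_simps)
    then show "((\<lambda>s. \<psi> (z + h *\<^sub>R u + s *\<^sub>R v) - \<psi> (z + s *\<^sub>R v)) has_real_derivative
        DD \<psi> (z + h *\<^sub>R u + s *\<^sub>R v) v - DD \<psi> (z + s *\<^sub>R v) v) (at s)"
      using diff(1) by (intro DERIV_diff has_real_derivative_along_line) auto
  qed
  then obtain s where s: "0 < s" "s < h"
    and eq_s: "\<psi> (z + h *\<^sub>R v + h *\<^sub>R u) - \<psi> (z + h *\<^sub>R v) - \<psi> (z + h *\<^sub>R u) + \<psi> z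
       = h * (DD \<psi> (z + s *\<^sub>R v + h *\<^sub>R u) v - DD \<psi> (z + s *\<^sub>R v + 0 *\<^sub>R u) v)"
    by (auto simp: algebra_simps)
  have "\<exists>t. 0 < t \<and> t < h \<and>
      DD \<psi> (z + s *\<^sub>R v + h *\<^sub>R u) v - DD \<psi> (z + s *\<^sub>R v + 0 *\<^sub>R u) v
      = (h - 0) * DD (\<lambda>w. DD \<psi> w v) (z + s *\<^sub>R v + t *\<^sub>R u) u"
  proof (rule MVT2[OF h])
    fix t assume "0 \<le> t" "t \<le> h"
    then have "z + s *\<^sub>R v + t *\<^sub>R u \<in> S"
      using box s by simp
    then show "((\<lambda>t. DD \<psi> (z + s *\<^sub>R v + t *\<^sub>R u) v) has_real_derivative
        DD (\<lambda>w. DD \<psi> w v) (z + s *\<^sub>R v + t *\<^sub>R u) u) (at t)"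
      using diff(2) by (intro has_real_derivative_along_line[where \<psi> = "\<lambda>w. DD \<psi> w v"]) auto
  qed
  then obtain t where "0 < t" "t < h"
    "DD \<psi> (z + s *\<^sub>R v + h *\<^sub>R u) v - DD \<psi> (z + s *\<^sub>R v + 0 *\<^sub>R u) v
      = h * DD (\<lambda>w. DD \<psi> w v) (z + s *\<^sub>R v + t *\<^sub>R u) u"
    by auto
  with s eq_s show ?thesis
    by (intro that[of s t]) (simp_all add: power2_eq_square)
qed

lemma frechet_derivative_second_symmetric:
  fixes \<psi> :: "'a::real_normed_vector \<Rightarrow> real"
  assumes U: "open U" "z \<in> U" and C2: "Ck_on 2 \<psi> U"
  shows "DD (\<lambda>w. DD \<psi> w v) z u = DD (\<lambda>w. DD \<psi> w u) z v"
proof -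
  define G where "G v u x = DD (\<lambda>w. DD \<psi> w v) x u" for v u x
  have diff: "\<And>x. x \<in> U \<Longrightarrow> \<psi> differentiable (at x)"
    "\<And>v x. x \<in> U \<Longrightarrow> (\<lambda>w. DD \<psi> w v) differentiable (at x)"
    and cont: "\<And>v u. continuous_on U (G v u)"
    using C2 by (auto simp: numeral_2_eq_2 G_def)
  have close: "\<bar>G v u z - G u v z\<bar> < e" if "e > 0" for e
  proof -
    obtain d1 where d1: "d1 > 0" "\<And>x. x \<in> U \<Longrightarrow> dist x z < d1 \<Longrightarrow> \<bar>G v u x - G v u z\<bar> < e / 2"
      using cont[of v u] U(2) \<open>e > 0\<close> unfolding continuous_on_iff dist_real_def
      by (metis half_gt_zero)
    obtain d2 where d2: "d2 > 0" "\<And>x. x \<in> U \<Longrightarrow> dist x z < d2 \<Longrightarrow> \<bar>G u v x - G u v z\<bar> < e / 2"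
      using cont[of u v] U(2) \<open>e > 0\<close> unfolding continuous_on_iff dist_real_def
      by (metis half_gt_zero)
    obtain r where r: "r > 0" "ball z r \<subseteq> U"
      using U openE by blast
    define m where "m = norm v + norm u + 1"
    define h where "h = min r (min d1 d2) / (2 * m)"
    have m: "m > 0" unfolding m_def by (simp add: add_nonneg_pos)
    have h: "h > 0" "h * m < r" "h * m < d1" "h * m < d2"
      using r d1 d2 m unfolding h_def by (auto simp: field_simps)
    have near: "dist (z + s *\<^sub>R v + t *\<^sub>R u) z < min r (min d1 d2)"
      if "0 \<le> s" "s \<le> h" "0 \<le> t" "t \<le> h" for s t
    proof -
      have "norm (s *\<^sub>R v + t *\<^sub>R u) \<le> h * norm v + h * norm u"
        using that by (intro norm_triangle_le add_mono) (auto intro: mult_right_mono)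
      also have "\<dots> < h * m" using h unfolding m_def by (simp add: algebra_simps)
      finally show ?thesis using h unfolding dist_norm by (simp add: algebra_simps)
    qed
    then have box: "z + s *\<^sub>R v + t *\<^sub>R u \<in> U"
      if "0 \<le> s" "s \<le> h" "0 \<le> t" "t \<le> h" for s t
      using that r by (auto simp: dist_commute subset_iff)
    have box_swap: "z + s *\<^sub>R u + t *\<^sub>R v \<in> U"
      if "0 \<le> s" "s \<le> h" "0 \<le> t" "t \<le> h" for s t
      using box[of t s] that by (simp add: add_ac)
    obtain s t where st: "0 < s" "s < h" "0 < t" "t < h"
      and eq1: "\<psi> (z + h *\<^sub>R v + h *\<^sub>R u) - \<psi> (z + h *\<^sub>R v) - \<psi> (z + h *\<^sub>R u) + \<psi> z
         = h\<^sup>2 * G v u (z + s *\<^sub>R v + t *\<^sub>R u)"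
      unfolding G_def by (rule mixed_difference_mean_value[OF h(1) box diff])
    obtain s' t' where st': "0 < s'" "s' < h" "0 < t'" "t' < h"
      and eq2: "\<psi> (z + h *\<^sub>R u + h *\<^sub>R v) - \<psi> (z + h *\<^sub>R u) - \<psi> (z + h *\<^sub>R v) + \<psi> z
         = h\<^sup>2 * G u v (z + s' *\<^sub>R u + t' *\<^sub>R v)"
      unfolding G_def by (rule mixed_difference_mean_value[OF h(1) box_swap diff])
    have "G v u (z + s *\<^sub>R v + t *\<^sub>R u) = G u v (z + s' *\<^sub>R u + t' *\<^sub>R v)"
      using eq1 eq2 h(1) by (simp add: algebra_simps)
    moreover have "\<bar>G v u (z + s *\<^sub>R v + t *\<^sub>R u) - G v u z\<bar> < e / 2"
      using st near[of s t] by (intro d1 box) auto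
    moreover have "\<bar>G u v (z + s' *\<^sub>R u + t' *\<^sub>R v) - G u v z\<bar> < e / 2"
      using st' near[of t' s'] by (intro d2 box_swap) (auto simp: add_ac)
    ultimately show ?thesis by linarith
  qed
  show ?thesis
    using close[of "\<bar>G v u z - G u v z\<bar>"] unfolding G_def by fastforce
qed

lemma smooth_frechet_derivative_second_symmetric:
  fixes G :: "'a::real_normed_vector \<Rightarrow> complex"
  assumes U: "open U" "z \<in> U" and smooth: "smooth_on_set G U"
  shows "DD (\<lambda>w. DD G w v) z u = DD (\<lambda>w. DD G w u) z v"
proof -
  have commute_linear: "DD (\<lambda>w. DD (\<lambda>x. L (G x)) w v) z u = L (DD (\<lambda>w. DD G w v) z u)"
    if L: "bounded_linear L" for L :: "complex \<Rightarrow> real" and v u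
  proof -
    have "(\<lambda>w. DD G w v) differentiable (at z)"
      using smooth_on_set_imp_differentiable[OF smooth_on_set_frechet_derivative[OF smooth] U(2)] .
    then obtain D where D: "((\<lambda>w. DD G w v) has_derivative D) (at z)"
      unfolding differentiable_def by blast
    have "DD (\<lambda>x. L (G x)) w = (\<lambda>h. L (DD G w h))" if "w \<in> U" for w
      using smooth_on_set_imp_differentiable[OF smooth that]
      by (metis L bounded_linear.has_derivative frechet_derivative_at frechet_derivative_works)
    then have "DD (\<lambda>w. DD (\<lambda>x. L (G x)) w v) z = DD (\<lambda>w. L (DD G w v)) z"
      using bounded_linear.has_derivative[OF L D] U
      by (intro frechet_derivative_transform_within_open[of _ _ U, symmetric])
         (auto simp: differentiable_def)
    also have "\<dots> = (\<lambda>h. L (D h))"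
      using frechet_derivative_at[OF bounded_linear.has_derivative[OF L D]] by simp
    finally show ?thesis
      using frechet_derivative_at[OF D] by simp
  qed
  have "Ck_on 2 (\<lambda>x. Re (G x)) U" "Ck_on 2 (\<lambda>x. Im (G x)) U"
    using smooth_on_set_compose_bounded_linear[OF U(1) bounded_linear_Re smooth]
      smooth_on_set_compose_bounded_linear[OF U(1) bounded_linear_Im smooth]
    by (auto simp: smooth_on_set_def)
  then show ?thesis
    using frechet_derivative_second_symmetric[OF U, of "\<lambda>x. Re (G x)" v u]
      frechet_derivative_second_symmetric[OF U, of "\<lambda>x. Im (G x)" v u]
      commute_linear[OF bounded_linear_Re] commute_linear[OF bounded_linear_Im]
    by (simp add: complex_eq_iff)
qed

section \<open>Wirtinger calculus\<close>

lemma wirt_dz_has_derivative: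
  "(G has_derivative G') (at z) \<Longrightarrow> wirt_dz G z a = (G' (axis a 1) - \<i> * G' (axis a \<i>)) / 2"
  by (simp add: wirt_dz_def frechet_derivative_at[symmetric])

lemma wirt_dzbar_has_derivative:
  "(G has_derivative G') (at z) \<Longrightarrow> wirt_dzbar G z a = (G' (axis a 1) + \<i> * G' (axis a \<i>)) / 2"
  by (simp add: wirt_dzbar_def frechet_derivative_at[symmetric])

context
  fixes G H :: "complex ^ 'n \<Rightarrow> complex" and z :: "complex ^ 'n"
  assumes G: "G differentiable (at z)" and H: "H differentiable (at z)"
begin

lemma wirt_dz_add: "wirt_dz (\<lambda>x. G x + H x) z a = wirt_dz G z a + wirt_dz H z a"
proof -
  have der: "((\<lambda>x. G x + H x) has_derivative (\<lambda>h. DD G z h + DD H z h)) (at z)"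
    using G H by (intro has_derivative_add) (simp_all add: frechet_derivative_works)
  show ?thesis
    unfolding wirt_dz_has_derivative[OF der] by (simp add: wirt_dz_def field_simps)
qed

lemma wirt_dz_diff: "wirt_dz (\<lambda>x. G x - H x) z a = wirt_dz G z a - wirt_dz H z a"
proof -
  have der: "((\<lambda>x. G x - H x) has_derivative (\<lambda>h. DD G z h - DD H z h)) (at z)"
    using G H by (intro has_derivative_diff) (simp_all add: frechet_derivative_works)
  show ?thesis
    unfolding wirt_dz_has_derivative[OF der] by (simp add: wirt_dz_def field_simps)
qed

lemma wirt_dzbar_diff: "wirt_dzbar (\<lambda>x. G x - H x) z a = wirt_dzbar G z a - wirt_dzbar H z a"
proof -
  have der: "((\<lambda>x. G x - H x) has_derivative (\<lambda>h. DD G z h - DD H z h)) (at z)"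
    using G H by (intro has_derivative_diff) (simp_all add: frechet_derivative_works)
  show ?thesis
    unfolding wirt_dzbar_has_derivative[OF der] by (simp add: wirt_dzbar_def field_simps)
qed

lemma wirt_dz_mult: "wirt_dz (\<lambda>x. G x * H x) z a = wirt_dz G z a * H z + G z * wirt_dz H z a"
proof -
  have der: "((\<lambda>x. G x * H x) has_derivative (\<lambda>h. G z * DD H z h + DD G z h * H z)) (at z)"
    using G H by (intro has_derivative_mult) (simp_all add: frechet_derivative_works)
  show ?thesis
    unfolding wirt_dz_has_derivative[OF der] by (simp add: wirt_dz_def field_simps)
qed

lemma wirt_dzbar_mult: "wirt_dzbar (\<lambda>x. G x * H x) z a = wirt_dzbar G z a * H z + G z * wirt_dzbar H z a"
proof -
  have der: "((\<lambda>x. G x * H x) has_derivative (\<lambda>h. G z * DD H z h + DD G z h * H z)) (at z)"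
    using G H by (intro has_derivative_mult) (simp_all add: frechet_derivative_works)
  show ?thesis
    unfolding wirt_dzbar_has_derivative[OF der] by (simp add: wirt_dzbar_def field_simps)
qed

end

lemma wirt_dz_sum:
  fixes G :: "'i \<Rightarrow> complex ^ 'n \<Rightarrow> complex"
  assumes "finite S" "\<And>i. i \<in> S \<Longrightarrow> G i differentiable (at z)"
  shows "wirt_dz (\<lambda>x. \<Sum>i\<in>S. G i x) z a = (\<Sum>i\<in>S. wirt_dz (G i) z a)"
proof -
  have der: "((\<lambda>x. \<Sum>i\<in>S. G i x) has_derivative (\<lambda>h. \<Sum>i\<in>S. DD (G i) z h)) (at z)"
    using assms by (intro has_derivative_sum) (simp_all add: frechet_derivative_works)
  show ?thesis
    unfolding wirt_dz_has_derivative[OF der] by (simp add: wirt_dz_def sum_divide_distrib[symmetric] sum_subtractf sum_distrib_left)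
qed

lemma wirt_dzbar_sum:
  fixes G :: "'i \<Rightarrow> complex ^ 'n \<Rightarrow> complex"
  assumes "finite S" "\<And>i. i \<in> S \<Longrightarrow> G i differentiable (at z)"
  shows "wirt_dzbar (\<lambda>x. \<Sum>i\<in>S. G i x) z a = (\<Sum>i\<in>S. wirt_dzbar (G i) z a)"
proof -
  have der: "((\<lambda>x. \<Sum>i\<in>S. G i x) has_derivative (\<lambda>h. \<Sum>i\<in>S. DD (G i) z h)) (at z)"
    using assms by (intro has_derivative_sum) (simp_all add: frechet_derivative_works)
  show ?thesis
    unfolding wirt_dzbar_has_derivative[OF der] by (simp add: wirt_dzbar_def sum_divide_distrib[symmetric] sum.distrib sum_distrib_left)
qed

lemma wirt_dz_cnj:
  fixes G :: "complex ^ 'n \<Rightarrow> complex"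
  assumes "G differentiable (at z)"
  shows "wirt_dz (\<lambda>x. cnj (G x)) z a = cnj (wirt_dzbar G z a)"
proof -
  have der: "((\<lambda>x. cnj (G x)) has_derivative (\<lambda>h. cnj (DD G z h))) (at z)"
    using assms by (intro has_derivative_cnj) (simp add: frechet_derivative_works)
  show ?thesis
    unfolding wirt_dz_has_derivative[OF der] by (simp add: wirt_dzbar_def)
qed

lemma wirt_dzbar_cnj:
  fixes G :: "complex ^ 'n \<Rightarrow> complex"
  assumes "G differentiable (at z)"
  shows "wirt_dzbar (\<lambda>x. cnj (G x)) z a = cnj (wirt_dz G z a)"
proof -
  have der: "((\<lambda>x. cnj (G x)) has_derivative (\<lambda>h. cnj (DD G z h))) (at z)"
    using assms by (intro has_derivative_cnj) (simp add: frechet_derivative_works)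
  show ?thesis
    unfolding wirt_dzbar_has_derivative[OF der] by (simp add: wirt_dz_def)
qed

lemma wirt_dz_const [simp]: "wirt_dz (\<lambda>x. c) z a = 0"
  by (simp add: wirt_dz_def)

lemma wirt_dzbar_const [simp]: "wirt_dzbar (\<lambda>x. c) z a = 0"
  by (simp add: wirt_dzbar_def)

lemma wirt_dz_coordinate: "wirt_dz (\<lambda>w::complex ^ 'n. w $ b) z a = (if a = b then 1 else 0)"
  unfolding wirt_dz_has_derivative[OF bounded_linear_imp_has_derivative[OF bounded_linear_vec_nth]]
  by (simp add: axis_def)

lemma wirt_dzbar_coordinate: "wirt_dzbar (\<lambda>w::complex ^ 'n. w $ b) z a = 0"
  unfolding wirt_dzbar_has_derivative[OF bounded_linear_imp_has_derivative[OF bounded_linear_vec_nth]]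
  by (simp add: axis_def)

lemma wirt_dz_locally_const:
  fixes G :: "complex ^ 'n \<Rightarrow> complex"
  assumes "open U" "z \<in> U" "\<And>x. x \<in> U \<Longrightarrow> G x = c"
  shows "wirt_dz G z a = 0"
proof -
  have "DD (\<lambda>x. c) z = DD G z"
    by (rule frechet_derivative_transform_within_open[OF _ assms(1,2)]) (simp_all add: assms(3))
  from this[symmetric] show ?thesis
    by (simp add: wirt_dz_def)
qed

lemma wirt_dzbar_locally_const:
  fixes G :: "complex ^ 'n \<Rightarrow> complex"
  assumes "open U" "z \<in> U" "\<And>x. x \<in> U \<Longrightarrow> G x = c"
  shows "wirt_dzbar G z a = 0"
proof -
  have "DD (\<lambda>x. c) z = DD G z"
    by (rule frechet_derivative_transform_within_open[OF _ assms(1,2)]) (simp_all add: assms(3))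
  from this[symmetric] show ?thesis
    by (simp add: wirt_dzbar_def)
qed

lemma smooth_on_set_wirt_dz:
  fixes G :: "complex ^ 'n \<Rightarrow> complex"
  assumes "open U" "smooth_on_set G U"
  shows "smooth_on_set (\<lambda>w. wirt_dz G w a) U"
proof -
  have "smooth_on_set (\<lambda>w. (1/2) * DD G w (axis a 1) + (-\<i>/2) * DD G w (axis a \<i>)) U"
    using assms
    by (intro smooth_on_set_add smooth_on_set_compose_bounded_linear[OF _ bounded_linear_mult_right]
        smooth_on_set_frechet_derivative) auto
  then show ?thesis
    by (rule smooth_on_set_cong[OF assms(1), rotated]) (simp add: wirt_dz_def field_simps)
qed

lemma smooth_on_set_wirt_dzbar:
  fixes G :: "complex ^ 'n \<Rightarrow> complex"
  assumes "open U" "smooth_on_set G U"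
  shows "smooth_on_set (\<lambda>w. wirt_dzbar G w a) U"
proof -
  have "smooth_on_set (\<lambda>w. (1/2) * DD G w (axis a 1) + (\<i>/2) * DD G w (axis a \<i>)) U"
    using assms
    by (intro smooth_on_set_add smooth_on_set_compose_bounded_linear[OF _ bounded_linear_mult_right]
        smooth_on_set_frechet_derivative) auto
  then show ?thesis
    by (rule smooth_on_set_cong[OF assms(1), rotated]) (simp add: wirt_dzbar_def field_simps)
qed

context
  fixes G :: "complex ^ 'n \<Rightarrow> complex" and z :: "complex ^ 'n"
  assumes diff: "\<And>v. (\<lambda>w. DD G w v) differentiable (at z)"
begin

lemma frechet_derivative_wirt_dz:
  "DD (\<lambda>w. wirt_dz G w a) z h
     = (DD (\<lambda>w. DD G w (axis a 1)) z h - \<i> * DD (\<lambda>w. DD G w (axis a \<i>)) z h) / 2"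
proof -
  have "((\<lambda>w. wirt_dz G w a) has_derivative
      (\<lambda>h. (DD (\<lambda>w. DD G w (axis a 1)) z h - \<i> * DD (\<lambda>w. DD G w (axis a \<i>)) z h) / 2)) (at z)"
    unfolding wirt_dz_def using diff[unfolded frechet_derivative_works]
    by (intro derivative_eq_intros) auto
  from fun_cong[OF frechet_derivative_at[OF this]] show ?thesis ..
qed

lemma frechet_derivative_wirt_dzbar:
  "DD (\<lambda>w. wirt_dzbar G w a) z h
     = (DD (\<lambda>w. DD G w (axis a 1)) z h + \<i> * DD (\<lambda>w. DD G w (axis a \<i>)) z h) / 2"
proof -
  have "((\<lambda>w. wirt_dzbar G w a) has_derivative
      (\<lambda>h. (DD (\<lambda>w. DD G w (axis a 1)) z h + \<i> * DD (\<lambda>w. DD G w (axis a \<i>)) z h) / 2)) (at z)"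
    unfolding wirt_dzbar_def using diff[unfolded frechet_derivative_works]
    by (intro derivative_eq_intros) auto
  from fun_cong[OF frechet_derivative_at[OF this]] show ?thesis ..
qed

end

context
  fixes G :: "complex ^ 'n \<Rightarrow> complex" and U :: "(complex ^ 'n) set" and z :: "complex ^ 'n"
  assumes U: "open U" "z \<in> U" and smooth: "smooth_on_set G U"
begin

lemma wirt_dz_wirt_dz_commute:
  "wirt_dz (\<lambda>w. wirt_dz G w a) z b = wirt_dz (\<lambda>w. wirt_dz G w b) z a"
proof -
  have diff: "(\<lambda>w. DD G w v) differentiable (at z)" for v
    using smooth_on_set_imp_differentiable[OF smooth_on_set_frechet_derivative[OF smooth] U(2)] .
  note sym = smooth_frechet_derivative_second_symmetric[OF U smooth]
  show ?thesis
    unfolding wirt_dz_def[of "\<lambda>w. wirt_dz G w a"] wirt_dz_def[of "\<lambda>w. wirt_dz G w b"]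
      frechet_derivative_wirt_dz[OF diff]
    by (subst sym[of "axis a 1" "axis b 1"], subst sym[of "axis a 1" "axis b \<i>"],
        subst sym[of "axis a \<i>" "axis b 1"], subst sym[of "axis a \<i>" "axis b \<i>"])
       (simp add: field_simps)
qed

lemma wirt_dzbar_wirt_dz_commute:
  "wirt_dzbar (\<lambda>w. wirt_dz G w a) z b = wirt_dz (\<lambda>w. wirt_dzbar G w b) z a"
proof -
  have diff: "(\<lambda>w. DD G w v) differentiable (at z)" for v
    using smooth_on_set_imp_differentiable[OF smooth_on_set_frechet_derivative[OF smooth] U(2)] .
  note sym = smooth_frechet_derivative_second_symmetric[OF U smooth]
  show ?thesis
    unfolding wirt_dz_def[of "\<lambda>w. wirt_dzbar G w b"] wirt_dzbar_def[of "\<lambda>w. wirt_dz G w a"]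
      frechet_derivative_wirt_dz[OF diff] frechet_derivative_wirt_dzbar[OF diff]
    by (subst sym[of "axis a 1" "axis b 1"], subst sym[of "axis a 1" "axis b \<i>"],
        subst sym[of "axis a \<i>" "axis b 1"], subst sym[of "axis a \<i>" "axis b \<i>"])
       (simp add: field_simps)
qed

end

section \<open>The algebraic core\<close>

lemma norm_sq_eq_of_symmetric_system:
  fixes N :: "'n::finite \<Rightarrow> 'n \<Rightarrow> complex" and e :: "'n \<Rightarrow> complex" and K :: real
  assumes K: "K > 0" and N_sym: "\<And>a b. N a b = N b a"
    and NN: "\<And>b d. (\<Sum>a\<in>UNIV. N a b * cnj (N a d))
                     = (if b = d then of_real (K * (cmod (e b))\<^sup>2 - 1) else 0)"
    and Ne: "\<And>d. (\<Sum>a\<in>UNIV. N a d * cnj (e a)) = - e d"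
  shows "(cmod (e b))\<^sup>2 = 2 / K"
proof -
  define D where "D b = K * (cmod (e b))\<^sup>2 - 1" for b
  define w where "w b = D b - 1" for b
  have NN': "(\<Sum>a\<in>UNIV. N a b * cnj (N a d)) = (if b = d then of_real (D b) else 0)" for b d
    using NN unfolding D_def by simp
  have D_nonneg: "D b \<ge> 0" for b
  proof -
    have "of_real (D b) = (\<Sum>a\<in>UNIV. N a b * cnj (N a b))" using NN'[of b b] by simp
    also have "\<dots> = of_real (\<Sum>a\<in>UNIV. (cmod (N a b))\<^sup>2)"
      by (simp add: complex_norm_square[symmetric])
    finally have "D b = (\<Sum>a\<in>UNIV. (cmod (N a b))\<^sup>2)" by (simp only: of_real_eq_iff)
    then show ?thesis by (simp add: sum_nonneg)
  qed
  have N_D_commute: "N a b * of_real (w b) = of_real (w a) * N a b" for a b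
  proof -
    define T where "T = (\<Sum>c\<in>UNIV. \<Sum>k\<in>UNIV. N a c * cnj (N k c) * N k b)"
    have "T = (\<Sum>c\<in>UNIV. N a c * (\<Sum>k\<in>UNIV. N k b * cnj (N k c)))"
      unfolding T_def by (simp add: sum_distrib_left mult_ac)
    also have "\<dots> = N a b * of_real (D b)"
      by (simp add: NN' if_distrib cong: if_cong)
    finally have "T = N a b * of_real (D b)" .
    moreover have "T = (\<Sum>k\<in>UNIV. (\<Sum>c\<in>UNIV. N c a * cnj (N c k)) * N k b)"
      unfolding T_def by (subst sum.swap) (simp add: sum_distrib_right N_sym[of a] N_sym[of k for k])
    then have "T = of_real (D a) * N a b"
      by (simp add: NN' if_distrib if_distribR cong: if_cong)
    ultimately show ?thesis unfolding w_def by (simp add: algebra_simps) metis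
  qed
  have e_eq: "e b = - (\<Sum>a\<in>UNIV. N a b * cnj (e a))" for b
    using Ne[of b] by simp
  have "(\<Sum>b\<in>UNIV. of_real (w b) * (e b * cnj (e b)))
      = (\<Sum>b\<in>UNIV. \<Sum>a\<in>UNIV. \<Sum>c\<in>UNIV. (N a b * of_real (w b)) * cnj (N c b) * cnj (e a) * e c)"
    by (subst (1 2) e_eq) (simp add: sum_distrib_left sum_distrib_right mult_ac)
  also have "\<dots> = (\<Sum>a\<in>UNIV. \<Sum>c\<in>UNIV. of_real (w a) * (\<Sum>b\<in>UNIV. N b a * cnj (N b c)) * cnj (e a) * e c)"
    unfolding N_D_commute
    by (subst sum.swap, rule sum.cong[OF refl], subst sum.swap)
       (simp add: sum_distrib_left sum_distrib_right N_sym mult_ac)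
  also have "\<dots> = (\<Sum>a\<in>UNIV. of_real (w a * D a) * (e a * cnj (e a)))"
    by (simp add: NN' if_distrib if_distribR mult_ac cong: if_cong)
  finally have "of_real (\<Sum>b\<in>UNIV. w b * (cmod (e b))\<^sup>2)
      = (of_real (\<Sum>b\<in>UNIV. w b * D b * (cmod (e b))\<^sup>2) :: complex)"
    by (simp only: of_real_sum of_real_mult complex_norm_square)
  then have "(\<Sum>b\<in>UNIV. w b * D b * (cmod (e b))\<^sup>2 - w b * (cmod (e b))\<^sup>2) = 0"
    by (simp only: of_real_eq_iff sum_subtractf)
  moreover have "w b * D b * x - w b * x = (w b)\<^sup>2 * x" for b x
    by (simp add: w_def power2_eq_square algebra_simps)
  ultimately have "(\<Sum>b\<in>UNIV. (w b)\<^sup>2 * (cmod (e b))\<^sup>2) = 0"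
    by simp
  then have "(w b)\<^sup>2 * (cmod (e b))\<^sup>2 = 0"
    by (subst (asm) sum_nonneg_eq_0_iff) auto
  moreover have "(cmod (e b))\<^sup>2 \<noteq> 0"
    using D_nonneg[of b] unfolding D_def by auto
  ultimately show ?thesis
    using K unfolding w_def D_def by (simp add: field_simps)
qed

(* With u = g^{a abar}, p = dzbar of u and f = d phi, the shift makes the cross terms of the
   second variation cancel. *)
definition shifted_hessian ::
    "('n \<Rightarrow> real) \<Rightarrow> ('n \<Rightarrow> complex) \<Rightarrow> ('n \<Rightarrow> complex) \<Rightarrow> ('n \<Rightarrow> 'n \<Rightarrow> complex) \<Rightarrow> 'n \<Rightarrow> 'n \<Rightarrow> complex"
  where "shifted_hessian u p f H a b = H a b + (if a = b then cnj (p a) * f a / of_real (u a) else 0)"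

lemma shifted_first_variation:
  fixes u :: "'n::finite \<Rightarrow> real" and p f :: "'n \<Rightarrow> complex" and H :: "'n \<Rightarrow> 'n \<Rightarrow> complex"
  assumes u: "\<And>a. u a \<noteq> 0"
    and first: "p d * (f d * cnj (f d)) + cnj (f d) + (\<Sum>a\<in>UNIV. of_real (u a) * f a * cnj (H a d)) = 0"
  shows "cnj (f d) + (\<Sum>a\<in>UNIV. of_real (u a) * f a * cnj (shifted_hessian u p f H a d)) = 0"
proof -
  have "of_real (u a) * f a * cnj (shifted_hessian u p f H a d)
      = of_real (u a) * f a * cnj (H a d) + (if a = d then p a * (f a * cnj (f a)) else 0)" for a
    using u[of a] by (auto simp: shifted_hessian_def field_simps)
  then show ?thesis
    using first by (simp add: sum.distrib algebra_simps)
qed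

lemma shifted_second_variation:
  fixes K :: real and u :: "'n::finite \<Rightarrow> real" and p q g f :: "'n \<Rightarrow> complex"
    and H :: "'n \<Rightarrow> 'n \<Rightarrow> complex"
  assumes u: "\<And>a. u a \<noteq> 0"
    and q_p: "q b * of_real (u b) - p b * cnj (p b) = - of_real K * of_real (u b)"
    and second: "(if b = d then q d * (f d * cnj (f d)) + g d else 0) + p d * H d b * cnj (f d)
        + cnj (p b) * f b * cnj (H b d) + (\<Sum>a\<in>UNIV. of_real (u a) * H a b * cnj (H a d)) = 0"
  shows "(\<Sum>a\<in>UNIV. of_real (u a) * shifted_hessian u p f H a b * cnj (shifted_hessian u p f H a d))
      = (if b = d then of_real K * (f b * cnj (f b)) - g b else 0)"
proof -
  have "of_real (u a) * shifted_hessian u p f H a b * cnj (shifted_hessian u p f H a d)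
      = of_real (u a) * H a b * cnj (H a d)
        + (if a = b then cnj (p a) * f a * cnj (H a d) else 0)
        + (if a = d then p a * cnj (f a) * H a b else 0)
        + (if a = b \<and> a = d then p a * cnj (p a) * (f a * cnj (f a)) / of_real (u a) else 0)" for a
    using u[of a] by (auto simp: shifted_hessian_def field_simps)
  then have sum_eq: "(\<Sum>a\<in>UNIV. of_real (u a) * shifted_hessian u p f H a b * cnj (shifted_hessian u p f H a d))
      = (\<Sum>a\<in>UNIV. of_real (u a) * H a b * cnj (H a d)) + cnj (p b) * f b * cnj (H b d)
        + p d * cnj (f d) * H d b
        + (if b = d then p b * cnj (p b) * (f b * cnj (f b)) / of_real (u b) else 0)"
    by (simp add: sum.distrib conj_commute[of "_ = b"] cong: conj_cong)
  show ?thesis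
  proof (cases "b = d")
    case True
    have "(\<Sum>a\<in>UNIV. of_real (u a) * H a b * cnj (H a d)) + cnj (p b) * f b * cnj (H b d)
        + p d * cnj (f d) * H d b = - (q b * (f b * cnj (f b)) + g b)"
      using second True by (simp add: algebra_simps eq_neg_iff_add_eq_0)
    moreover have "p b * cnj (p b) * (f b * cnj (f b)) / of_real (u b) = (of_real K + q b) * (f b * cnj (f b))"
    proof -
      have "p b * cnj (p b) = (of_real K + q b) * of_real (u b)"
        using q_p by (simp add: algebra_simps)
      then show ?thesis using u[of b] by simp
    qed
    ultimately show ?thesis
      unfolding sum_eq if_P[OF True] by (simp add: algebra_simps)
  next
    case False
    then show ?thesis
      using second unfolding sum_eq by (simp add: algebra_simps)
  qed
qed

lemma weighted_norm_sq_eq_of_variations: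
  fixes K :: real and u :: "'n::finite \<Rightarrow> real" and p q g f :: "'n \<Rightarrow> complex"
    and H :: "'n \<Rightarrow> 'n \<Rightarrow> complex"
  assumes K: "K > 0" and u: "\<And>a. u a > 0"
    and g_u: "\<And>a. g a * of_real (u a) = 1"
    and q_p: "\<And>a. q a * of_real (u a) - p a * cnj (p a) = - of_real K * of_real (u a)"
    and H_sym: "\<And>a b. H a b = H b a"
    and first: "\<And>d. p d * (f d * cnj (f d)) + cnj (f d) + (\<Sum>a\<in>UNIV. of_real (u a) * f a * cnj (H a d)) = 0"
    and second: "\<And>b d. (if b = d then q d * (f d * cnj (f d)) + g d else 0) + p d * H d b * cnj (f d)
        + cnj (p b) * f b * cnj (H b d) + (\<Sum>a\<in>UNIV. of_real (u a) * H a b * cnj (H a d)) = 0"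
  shows "u a * (cmod (f a))\<^sup>2 = 2 / K"
proof -
  define Hh where "Hh = shifted_hessian u p f H"
  define s where "s a = sqrt (u a)" for a
  define N where "N a b = of_real (s a * s b) * Hh a b" for a b
  define e where "e a = of_real (s a) * f a" for a
  have u_nz: "u a \<noteq> 0" for a using u[of a] by simp
  have s_sq: "of_real (s a) * of_real (s a) = (of_real (u a) :: complex)" for a
    using u[of a] unfolding s_def by (simp flip: of_real_mult)
  have N_sym: "N a b = N b a" for a b
    unfolding N_def Hh_def shifted_hessian_def using H_sym by (auto simp: mult.commute)
  have NN: "(\<Sum>a\<in>UNIV. N a b * cnj (N a d)) = (if b = d then of_real (K * (cmod (e b))\<^sup>2 - 1) else 0)" for b d
  proof -
    have "(\<Sum>a\<in>UNIV. N a b * cnj (N a d))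
        = of_real (s b * s d) * (\<Sum>a\<in>UNIV. of_real (u a) * Hh a b * cnj (Hh a d))"
      unfolding N_def by (simp add: sum_distrib_left s_sq[symmetric] mult_ac)
    also have "\<dots> = of_real (s b * s d) * (if b = d then of_real K * (f b * cnj (f b)) - g b else 0)"
      unfolding Hh_def by (simp only: shifted_second_variation[where g = g and K = K, OF u_nz q_p[of b] second[of b d]])
    also have "\<dots> = (if b = d then of_real (K * (cmod (e b))\<^sup>2 - 1) else 0)"
    proof -
      have "g b * (of_real (s b) * of_real (s b)) = 1" using g_u[of b] by (simp only: s_sq)
      then have "of_real (s b * s b) * (of_real K * (f b * cnj (f b)) - g b)
          = of_real K * (e b * cnj (e b)) - 1"
        unfolding e_def by (simp add: algebra_simps)
      then show ?thesis
        by (simp only: of_real_diff of_real_mult of_real_1 complex_norm_square) auto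
    qed
    finally show ?thesis .
  qed
  have Ne: "(\<Sum>a\<in>UNIV. N a d * cnj (e a)) = - e d" for d
  proof -
    have "(\<Sum>a\<in>UNIV. N a d * cnj (e a))
        = of_real (s d) * cnj (\<Sum>a\<in>UNIV. of_real (u a) * f a * cnj (Hh a d))"
      unfolding N_def e_def by (simp add: sum_distrib_left s_sq[symmetric] N_sym mult_ac)
    also have "\<dots> = - e d"
    proof -
      have "cnj (f d) + (\<Sum>a\<in>UNIV. of_real (u a) * f a * cnj (Hh a d)) = 0"
        unfolding Hh_def by (rule shifted_first_variation[OF u_nz first])
      then have "cnj (\<Sum>a\<in>UNIV. of_real (u a) * f a * cnj (Hh a d)) = - f d"
        by (metis add_eq_0_iff complex_cnj_cnj complex_cnj_minus)
      then show ?thesis unfolding e_def by simp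
    qed
    finally show ?thesis .
  qed
  have "(cmod (e a))\<^sup>2 = 2 / K"
    by (rule norm_sq_eq_of_symmetric_system[OF K N_sym NN Ne])
  then show ?thesis
    using u[of a] unfolding e_def s_def by (simp add: norm_mult power_mult_distrib)
qed

section \<open>The inverse polydisc metric\<close>

(* |w $ a|^2 is written as w $ a * cnj (w $ a) so that the Wirtinger product rules apply. *)
definition pd_inv_metric :: "real \<Rightarrow> 'n \<Rightarrow> complex ^ 'n \<Rightarrow> complex" where
  "pd_inv_metric K a w = of_real (K / 2) * ((1 - w $ a * cnj (w $ a)) * (1 - w $ a * cnj (w $ a)))"

definition pd_inv_metric_dzbar :: "real \<Rightarrow> 'n \<Rightarrow> complex ^ 'n \<Rightarrow> complex" where
  "pd_inv_metric_dzbar K a w = - of_real K * w $ a * (1 - w $ a * cnj (w $ a))"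

lemma differentiable_coordinate [simp]: "(\<lambda>w::complex ^ 'n. w $ b) differentiable (at z)"
  by (rule bounded_linear_imp_differentiable) (rule bounded_linear_vec_nth)

lemma differentiable_cnj_coordinate [simp]: "(\<lambda>w::complex ^ 'n. cnj (w $ b)) differentiable (at z)"
  by (simp add: differentiable_cnj_iff)

lemma differentiable_pd_inv_metric [simp]: "pd_inv_metric K a differentiable (at w)"
  unfolding pd_inv_metric_def by simp

lemma differentiable_pd_inv_metric_dzbar [simp]: "pd_inv_metric_dzbar K a differentiable (at w)"
  unfolding pd_inv_metric_dzbar_def by simp

lemmas wirt_polynomial_rules =
  wirt_dz_mult wirt_dzbar_mult wirt_dz_diff wirt_dzbar_diff wirt_dz_cnj wirt_dzbar_cnj
  wirt_dz_coordinate wirt_dzbar_coordinate differentiable_mult differentiable_diff differentiable_const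
  differentiable_coordinate differentiable_cnj_coordinate

lemma wirt_dz_pd_inv_metric:
  "wirt_dz (pd_inv_metric K a) w b = (if a = b then cnj (pd_inv_metric_dzbar K a w) else 0)"
  unfolding pd_inv_metric_def pd_inv_metric_dzbar_def
  by (simp only: wirt_polynomial_rules wirt_dz_const wirt_dzbar_const) (simp add: algebra_simps)

lemma wirt_dzbar_pd_inv_metric:
  "wirt_dzbar (pd_inv_metric K a) w b = (if a = b then pd_inv_metric_dzbar K a w else 0)"
  unfolding pd_inv_metric_def pd_inv_metric_dzbar_def
  by (simp only: wirt_polynomial_rules wirt_dz_const wirt_dzbar_const) (simp add: algebra_simps)

lemma wirt_dz_pd_inv_metric_dzbar:
  "wirt_dz (pd_inv_metric_dzbar K a) w b
     = (if a = b then - of_real K * (1 - 2 * (w $ a * cnj (w $ a))) else 0)"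
  unfolding pd_inv_metric_dzbar_def
  by (simp only: wirt_polynomial_rules wirt_dz_const wirt_dzbar_const) (simp add: algebra_simps)

lemma pd_inv_metric_of_real:
  "pd_inv_metric K a w = of_real (K / 2 * (1 - (cmod (w $ a))\<^sup>2)\<^sup>2)"
proof -
  have "w $ a * cnj (w $ a) = of_real ((cmod (w $ a))\<^sup>2)"
    by (rule complex_norm_square[symmetric])
  then show ?thesis
    unfolding pd_inv_metric_def by (simp add: power2_eq_square)
qed

lemma pd_inv_metric_dzbar_identity:
  "- of_real K * (1 - 2 * (w $ a * cnj (w $ a))) * pd_inv_metric K a w
     - pd_inv_metric_dzbar K a w * cnj (pd_inv_metric_dzbar K a w)
   = - of_real K * pd_inv_metric K a w"
  by (simp add: pd_inv_metric_def pd_inv_metric_dzbar_def field_simps)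

lemma grad_len_sq_pd_inv_metric:
  "of_real (grad_len_sq K \<phi> w)
     = (\<Sum>a\<in>UNIV. pd_inv_metric K a w
          * (wirt_dz (\<lambda>u. of_real (\<phi> u)) w a * cnj (wirt_dz (\<lambda>u. of_real (\<phi> u)) w a)))"
  unfolding grad_len_sq_def pd_metric_def pd_inv_metric_of_real of_real_sum
  by (auto simp: complex_norm_square[symmetric] mult_ac simp del: of_real_power intro!: sum.cong)

section \<open>Local potentials with constant gradient length\<close>

locale polydisc_potential =
  fixes K :: real and \<phi> :: "complex ^ 'n \<Rightarrow> real" and U :: "(complex ^ 'n) set"
  assumes K_pos: "K > 0" and potential: "local_potential K \<phi> U"
begin

definition dphi :: "'n \<Rightarrow> complex ^ 'n \<Rightarrow> complex" where
  "dphi a w = wirt_dz (\<lambda>u. complex_of_real (\<phi> u)) w a"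

definition ddphi :: "'n \<Rightarrow> 'n \<Rightarrow> complex ^ 'n \<Rightarrow> complex" where
  "ddphi a b w = wirt_dz (dphi a) w b"

lemma open_U: "open U"
  using potential by (simp add: local_potential_def)

lemma smooth_potential: "smooth_on_set (\<lambda>u. complex_of_real (\<phi> u)) U"
  using potential open_U unfolding local_potential_def
  by (intro smooth_on_set_compose_bounded_linear[OF _ bounded_linear_of_real]) auto

lemma smooth_dphi: "smooth_on_set (dphi a) U"
  unfolding dphi_def[abs_def] by (rule smooth_on_set_wirt_dz[OF open_U smooth_potential])

lemma smooth_ddphi: "smooth_on_set (ddphi a b) U"
  unfolding ddphi_def[abs_def] by (rule smooth_on_set_wirt_dz[OF open_U smooth_dphi])

lemma differentiable_dphi: "w \<in> U \<Longrightarrow> dphi a differentiable (at w)"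
  by (rule smooth_on_set_imp_differentiable[OF smooth_dphi])

lemma differentiable_ddphi: "w \<in> U \<Longrightarrow> ddphi a b differentiable (at w)"
  by (rule smooth_on_set_imp_differentiable[OF smooth_ddphi])

lemma wirt_dzbar_dphi: "w \<in> U \<Longrightarrow> wirt_dzbar (dphi a) w b = of_real (pd_metric K w a b)"
  using potential unfolding local_potential_def dphi_def[abs_def] by auto

lemma norm_sq_coordinate_less_one: "w \<in> U \<Longrightarrow> (cmod (w $ a))\<^sup>2 < 1"
  using potential unfolding local_potential_def polydisc_def
  by (auto simp: power_less_one_iff)

lemma pd_inv_metric_wirt_dzbar_dphi:
  assumes "w \<in> U"
  shows "pd_inv_metric K a w * wirt_dzbar (dphi a) w b = (if a = b then 1 else 0)"
proof -
  have "(cmod (w $ a))\<^sup>2 < 1"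
    by (rule norm_sq_coordinate_less_one[OF assms])
  then show ?thesis
    using K_pos
    by (cases "a = b")
       (simp_all add: wirt_dzbar_dphi[OF assms] pd_metric_def pd_inv_metric_of_real flip: of_real_mult)
qed


lemma wirt_dzbar_grad_len_sq:
  assumes w: "w \<in> U"
  shows "wirt_dzbar (\<lambda>x. \<Sum>a\<in>UNIV. pd_inv_metric K a x * (dphi a x * cnj (dphi a x))) w d
    = pd_inv_metric_dzbar K d w * (dphi d w * cnj (dphi d w)) + cnj (dphi d w)
      + (\<Sum>a\<in>UNIV. pd_inv_metric K a w * dphi a w * cnj (ddphi a d w))"
proof -
  have diff: "dphi a differentiable (at w)" "(\<lambda>x. cnj (dphi a x)) differentiable (at w)" for a
    using differentiable_dphi[OF w] by (simp_all add: differentiable_cnj_iff)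
  have "wirt_dzbar (\<lambda>x. pd_inv_metric K a x * (dphi a x * cnj (dphi a x))) w d
      = (if a = d then pd_inv_metric_dzbar K a w * (dphi a w * cnj (dphi a w)) + cnj (dphi a w) else 0)
        + pd_inv_metric K a w * dphi a w * cnj (ddphi a d w)" for a
  proof -
    have "wirt_dzbar (\<lambda>x. pd_inv_metric K a x * (dphi a x * cnj (dphi a x))) w d
        = wirt_dzbar (pd_inv_metric K a) w d * (dphi a w * cnj (dphi a w))
          + (pd_inv_metric K a w * wirt_dzbar (dphi a) w d) * cnj (dphi a w)
          + pd_inv_metric K a w * dphi a w * cnj (ddphi a d w)"
      using diff by (simp add: wirt_dzbar_mult wirt_dzbar_cnj ddphi_def algebra_simps)
    then show ?thesis
      unfolding pd_inv_metric_wirt_dzbar_dphi[OF w] wirt_dzbar_pd_inv_metric by auto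
  qed
  then show ?thesis
    using diff by (simp add: wirt_dzbar_sum sum.distrib)
qed

lemma first_variation:
  assumes const: "\<And>w. w \<in> U \<Longrightarrow> grad_len_sq K \<phi> w = c" and w: "w \<in> U"
  shows "pd_inv_metric_dzbar K d w * (dphi d w * cnj (dphi d w)) + cnj (dphi d w)
      + (\<Sum>a\<in>UNIV. pd_inv_metric K a w * dphi a w * cnj (ddphi a d w)) = 0"
proof -
  have "wirt_dzbar (\<lambda>x. \<Sum>a\<in>UNIV. pd_inv_metric K a x * (dphi a x * cnj (dphi a x))) w d = 0"
    using const
    by (intro wirt_dzbar_locally_const[OF open_U w, where c = "of_real c"])
       (simp add: grad_len_sq_pd_inv_metric[symmetric] dphi_def)
  then show ?thesis
    unfolding wirt_dzbar_grad_len_sq[OF w] .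
qed


lemma pd_inv_metric_wirt_dz_wirt_dzbar_dphi:
  assumes z: "z \<in> U"
  shows "pd_inv_metric K a z * wirt_dz (\<lambda>w. wirt_dzbar (dphi a) w b) z d
       = - (if a = d then cnj (pd_inv_metric_dzbar K a z) else 0) * wirt_dzbar (dphi a) z b"
proof -
  have "(\<lambda>w. wirt_dzbar (dphi a) w b) differentiable (at z)"
    by (rule smooth_on_set_imp_differentiable[OF smooth_on_set_wirt_dzbar[OF open_U smooth_dphi] z])
  moreover have "wirt_dz (\<lambda>w. pd_inv_metric K a w * wirt_dzbar (dphi a) w b) z d = 0"
    by (rule wirt_dz_locally_const[OF open_U z]) (rule pd_inv_metric_wirt_dzbar_dphi)
  ultimately show ?thesis
    by (auto simp: wirt_dz_mult wirt_dz_pd_inv_metric add_eq_0_iff)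
qed

lemma second_variation:
  assumes const: "\<And>w. w \<in> U \<Longrightarrow> grad_len_sq K \<phi> w = c" and z: "z \<in> U"
  shows "(if b = d then - of_real K * (1 - 2 * (z $ d * cnj (z $ d))) * (dphi d z * cnj (dphi d z))
            + wirt_dzbar (dphi d) z d else 0)
      + pd_inv_metric_dzbar K d z * ddphi d b z * cnj (dphi d z)
      + cnj (pd_inv_metric_dzbar K b z) * dphi b z * cnj (ddphi b d z)
      + (\<Sum>a\<in>UNIV. pd_inv_metric K a z * ddphi a b z * cnj (ddphi a d z)) = 0"
proof -
  define E where "E w = pd_inv_metric_dzbar K d w * (dphi d w * cnj (dphi d w)) + cnj (dphi d w)
      + (\<Sum>a\<in>UNIV. pd_inv_metric K a w * dphi a w * cnj (ddphi a d w))" for w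
  have diff: "dphi a differentiable (at z)" "(\<lambda>x. cnj (dphi a x)) differentiable (at z)"
    "ddphi a e differentiable (at z)" "(\<lambda>x. cnj (ddphi a e x)) differentiable (at z)" for a e
    using differentiable_dphi[OF z] differentiable_ddphi[OF z] by (simp_all add: differentiable_cnj_iff)
  have g_diag: "wirt_dzbar (dphi a) z e = (if a = e then wirt_dzbar (dphi a) z a else 0)"
    and g_real: "cnj (wirt_dzbar (dphi a) z e) = wirt_dzbar (dphi a) z e" for a e
    by (simp_all add: wirt_dzbar_dphi[OF z] pd_metric_def)
  have third: "pd_inv_metric K a z * dphi a z * cnj (wirt_dzbar (ddphi a d) z b)
      = - (if a = d then dphi a z * pd_inv_metric_dzbar K a z * wirt_dzbar (dphi a) z b else 0)" for a
  proof -
    have "wirt_dzbar (ddphi a d) z b = wirt_dz (\<lambda>w. wirt_dzbar (dphi a) w b) z d"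
      unfolding ddphi_def[abs_def] by (rule wirt_dzbar_wirt_dz_commute[OF open_U z smooth_dphi])
    moreover have "cnj (pd_inv_metric K a z) = pd_inv_metric K a z"
      by (simp add: pd_inv_metric_of_real)
    ultimately have "pd_inv_metric K a z * cnj (wirt_dzbar (ddphi a d) z b)
        = cnj (pd_inv_metric K a z * wirt_dz (\<lambda>w. wirt_dzbar (dphi a) w b) z d)"
      by simp
    also have "\<dots> = - (if a = d then pd_inv_metric_dzbar K a z * wirt_dzbar (dphi a) z b else 0)"
      unfolding pd_inv_metric_wirt_dz_wirt_dzbar_dphi[OF z] by (auto simp: g_real)
    finally have "pd_inv_metric K a z * cnj (wirt_dzbar (ddphi a d) z b)
        = - (if a = d then pd_inv_metric_dzbar K a z * wirt_dzbar (dphi a) z b else 0)" .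
    from arg_cong[OF this, of "(*) (dphi a z)"] show ?thesis
      by (cases "a = d") (simp_all add: algebra_simps)
  qed
  have "wirt_dz E z b = 0"
    unfolding E_def by (rule wirt_dz_locally_const[OF open_U z first_variation[OF const]])
  moreover have "wirt_dz E z b
      = (if b = d then - of_real K * (1 - 2 * (z $ d * cnj (z $ d))) * (dphi d z * cnj (dphi d z)) else 0)
        + pd_inv_metric_dzbar K d z * (ddphi d b z * cnj (dphi d z) + dphi d z * cnj (wirt_dzbar (dphi d) z b))
        + cnj (wirt_dzbar (dphi d) z b)
        + (\<Sum>a\<in>UNIV. ((if a = b then cnj (pd_inv_metric_dzbar K a z) else 0) * dphi a z
              + pd_inv_metric K a z * ddphi a b z) * cnj (ddphi a d z)
            + pd_inv_metric K a z * dphi a z * cnj (wirt_dzbar (ddphi a d) z b))"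
    unfolding E_def using diff
    by (simp add: wirt_dz_add wirt_dz_mult wirt_dz_cnj wirt_dz_sum ddphi_def[symmetric]
        wirt_dz_pd_inv_metric wirt_dz_pd_inv_metric_dzbar)
  moreover have "(\<Sum>a\<in>UNIV. ((if a = b then cnj (pd_inv_metric_dzbar K a z) else 0) * dphi a z
              + pd_inv_metric K a z * ddphi a b z) * cnj (ddphi a d z)
            + pd_inv_metric K a z * dphi a z * cnj (wirt_dzbar (ddphi a d) z b))
      = cnj (pd_inv_metric_dzbar K b z) * dphi b z * cnj (ddphi b d z)
        + (\<Sum>a\<in>UNIV. pd_inv_metric K a z * ddphi a b z * cnj (ddphi a d z))
        - dphi d z * pd_inv_metric_dzbar K d z * wirt_dzbar (dphi d) z b"
  proof -
    have "((if a = b then cnj (pd_inv_metric_dzbar K a z) else 0) * dphi a z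
          + pd_inv_metric K a z * ddphi a b z) * cnj (ddphi a d z)
        + pd_inv_metric K a z * dphi a z * cnj (wirt_dzbar (ddphi a d) z b)
        = (if a = b then cnj (pd_inv_metric_dzbar K a z) * dphi a z * cnj (ddphi a d z) else 0)
          + pd_inv_metric K a z * ddphi a b z * cnj (ddphi a d z)
          - (if a = d then dphi a z * pd_inv_metric_dzbar K a z * wirt_dzbar (dphi a) z b else 0)" for a
      unfolding third by (simp add: algebra_simps)
    then show ?thesis
      by (simp add: sum.distrib sum_subtractf)
  qed
  ultimately show ?thesis
    using g_diag[of d b] g_real[of d b]
    by (cases "b = d") (simp_all add: algebra_simps)
qed


lemma grad_len_sq_eq_if_constant:
  assumes const: "\<And>w. w \<in> U \<Longrightarrow> grad_len_sq K \<phi> w = c" and z: "z \<in> U"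
  shows "grad_len_sq K \<phi> z = 2 * real CARD('n) / K"
proof -
  define u where "u a = K / 2 * (1 - (cmod (z $ a))\<^sup>2)\<^sup>2" for a
  have u: "pd_inv_metric K a z = of_real (u a)" for a
    unfolding u_def by (rule pd_inv_metric_of_real)
  have u_pos: "u a > 0" for a
    using norm_sq_coordinate_less_one[OF z, of a] K_pos unfolding u_def by simp
  have g_u: "wirt_dzbar (dphi a) z a * of_real (u a) = 1" for a
    using pd_inv_metric_wirt_dzbar_dphi[OF z, of a a] unfolding u by (simp add: mult.commute)
  have H_sym: "ddphi a b z = ddphi b a z" for a b
    unfolding ddphi_def dphi_def[abs_def]
    by (rule wirt_dz_wirt_dz_commute[OF open_U z smooth_potential])
  have "u a * (cmod (dphi a z))\<^sup>2 = 2 / K" for a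
    by (rule weighted_norm_sq_eq_of_variations[where K = K and u = u and p = "\<lambda>a. pd_inv_metric_dzbar K a z"
          and q = "\<lambda>a. - of_real K * (1 - 2 * (z $ a * cnj (z $ a)))"
          and g = "\<lambda>a. wirt_dzbar (dphi a) z a" and f = "\<lambda>a. dphi a z" and H = "\<lambda>a b. ddphi a b z",
          OF K_pos u_pos g_u pd_inv_metric_dzbar_identity[of K z, unfolded u] H_sym
          first_variation[OF const z, unfolded u] second_variation[OF const z, unfolded u]])
  moreover have "grad_len_sq K \<phi> z = (\<Sum>a\<in>UNIV. u a * (cmod (dphi a z))\<^sup>2)"
  proof -
    have "of_real (grad_len_sq K \<phi> z) = (of_real (\<Sum>a\<in>UNIV. u a * (cmod (dphi a z))\<^sup>2) :: complex)"
      unfolding grad_len_sq_pd_inv_metric dphi_def[symmetric] u of_real_sum of_real_mult complex_norm_square ..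
    then show ?thesis
      by (simp only: of_real_eq_iff)
  qed
  ultimately show ?thesis
    by simp
qed

end

theorem proposition3p1:
  fixes K :: real and \<phi> :: "complex ^ 'n \<Rightarrow> real" and U :: "(complex ^ 'n) set"
  assumes "K > 0"
    and "local_potential K \<phi> U"
    and "\<exists>c. \<forall>z\<in>U. grad_len_sq K \<phi> z = c"
  shows "\<forall>z\<in>U. grad_len_sq K \<phi> z = 2 * real CARD('n) / K"
proof -
  interpret polydisc_potential K \<phi> U
    using assms(1,2) by unfold_locales
  obtain c where "\<And>z. z \<in> U \<Longrightarrow> grad_len_sq K \<phi> z = c"
    using assms(3) by blast
  then show ?thesis
    using grad_len_sq_eq_if_constant by blast
qed

end
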